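(* Let $M$ be a closed manifold immersed in $(V,\omega)=(\mathbb{R}^{2d},\sum_i dx_i\wedge dy_i)$. (1) Let $n$ be odd. An $n$-gon $\mathbf{Z}=(z_1,\dots,z_n)$ in $V$ is an $n$-periodic orbit of the outer symplectic billiard correspondence if and only if its midpoint polygon $\mathbf{Q}=(Q_1,\dots,Q_n)$, $Q_i=\tfrac12(z_i+z_{i+1})$ (indices mod $n$), is inscribed in $M$ and is a critical point of the restriction to $M^{\times n}$ of $$F(Q_1,\dots,Q_n)=2\sum_{1\le i<j\le n}(-1)^{i+j-1}\omega(Q_i,Q_j).$$ (2) Let $L_1=\mathbb{R}^d_x\times\{0\}$ and $L_2=\{0\}\times\mathbb{R}^d_y$. A polygonal line $\mathbf{Z}=(z_1,\dots,z_{n+1})$ is an $n$-link outer symplectic billiard orbit connecting $L_1$ and $L_2$ if and only if the polygon $\mathbf{Q}=(Q_1,\dots,Q_n)$, $Q_i=\tfrac12(z_i+z_{i+1})$, is inscribed in $M$ and is a critical point of the restriction to $M^{\times n}$ of $$G(Q_1,\dots,Q_n)=2\sum_{i=1}^n q_i\cdot q_i'+4\sum_{1\le i<j\le n}(-1)^{j-i}q_j\cdot q_i',$$ where $Q_i=(q_i,q_i')$ with $q_i,q_i'\in\mathbb{R}^d$.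
   Context: Points of $V$ are written $(x,y)$ with $x,y\in\mathbb{R}^d$, and $\omega((x,y),(x',y'))=x\cdot y'-y\cdot x'$. Points of $M$ are identified with their images; for a point $Q$ of $M$, $T^\omega_QM=\{\xi:\omega(\xi,\zeta)=0\ \forall\zeta\in T_QM\}$. Two points $z,z'$ are in outer symplectic billiard correspondence with respect to $M$ if $\tfrac12(z+z')=Q$ is a point of $M$ and $z'-z\in T^\omega_QM$. An $n$-periodic orbit is an $n$-gon $(z_1,\dots,z_n)$ with $z_i,z_{i+1}$ in correspondence for all $i$ (indices mod $n$). An $n$-link orbit connecting $L_1$ and $L_2$ is $(z_1,\dots,z_{n+1})$ with $z_1\in L_1$, $z_{n+1}\in L_2$ and $z_i,z_{i+1}$ in correspondence for $i=1,\dots,n$. "Inscribed in $M$" means every $Q_i$ is a point of $M$. *)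

theory Defs
  imports "HOL-Analysis.Analysis"
begin

type_synonym 'd V = "(real^'d) \<times> (real^'d)"

definition omega :: "'d::finite V \<Rightarrow> 'd V \<Rightarrow> real" where
  "omega z w = fst z \<bullet> snd w - snd z \<bullet> fst w"

text \<open>C-infinity on an open set U of R^k: all iterated partial derivatives exist
  and are continuous (coinductive formulation: a family of functions containing g,
  closed under taking partial derivatives, all continuous on U).\<close>
definition smooth_on :: "(real^'k::finite) set \<Rightarrow> (real^'k \<Rightarrow> 'b::real_normed_vector) \<Rightarrow> bool" where
  "smooth_on U g \<longleftrightarrow> (\<exists>S. g \<in> S \<and> (\<forall>h\<in>S. continuous_on U h \<and>
      (\<forall>i. \<exists>h'\<in>S. \<forall>u\<in>U. ((\<lambda>t. h (u + t *\<^sub>R axis i 1)) has_vector_derivative h' u) (at 0))))"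

text \<open>A closed (compact, Hausdorff, without boundary) manifold, given as the space of
  the type 'p with a smooth atlas A of charts (U, phi), phi : U subset R^k -> 'p, together
  with a smooth immersion f : 'p -> V.  Smoothness of f and of the atlas is expressed by
  smoothness of the local representations f o phi; immersion = injective differential.\<close>
definition closed_immersed_manifold ::
  "('p::t2_space \<Rightarrow> 'd::finite V) \<Rightarrow> (((real^'k::finite) set) \<times> (real^'k \<Rightarrow> 'p)) set \<Rightarrow> bool" where
  "closed_immersed_manifold f A \<longleftrightarrow>
     compact (UNIV :: 'p set) \<and>
     (\<Union>(U,\<phi>)\<in>A. \<phi> ` U) = UNIV \<and>
     (\<forall>(U,\<phi>)\<in>A. open U \<and> open (\<phi> ` U) \<and> homeomorphism U (\<phi> ` U) \<phi> (inv_into U \<phi>) \<and>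
        smooth_on U (f \<circ> \<phi>) \<and>
        (\<forall>u\<in>U. \<exists>D. ((f \<circ> \<phi>) has_derivative D) (at u) \<and> inj D))"

definition tangent_space ::
  "('p \<Rightarrow> 'd::finite V) \<Rightarrow> (((real^'k::finite) set) \<times> (real^'k \<Rightarrow> 'p)) set \<Rightarrow> 'p \<Rightarrow> 'd V set" where
  "tangent_space f A p = {v. \<exists>(U,\<phi>)\<in>A. \<exists>u\<in>U. \<phi> u = p \<and>
       (\<exists>D. ((f \<circ> \<phi>) has_derivative D) (at u) \<and> v \<in> range D)}"

definition symp_orth ::
  "('p \<Rightarrow> 'd::finite V) \<Rightarrow> (((real^'k::finite) set) \<times> (real^'k \<Rightarrow> 'p)) set \<Rightarrow> 'p \<Rightarrow> 'd V set" where
  "symp_orth f A p = {\<xi>. \<forall>\<zeta>\<in>tangent_space f A p. omega \<xi> \<zeta> = 0}"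

definition osb_corr ::
  "('p \<Rightarrow> 'd::finite V) \<Rightarrow> (((real^'k::finite) set) \<times> (real^'k \<Rightarrow> 'p)) set \<Rightarrow> 'd V \<Rightarrow> 'd V \<Rightarrow> bool" where
  "osb_corr f A z z' \<longleftrightarrow> (\<exists>p. f p = (1/2) *\<^sub>R (z + z') \<and> z' - z \<in> symp_orth f A p)"

definition cnext :: "nat \<Rightarrow> nat \<Rightarrow> nat" where
  "cnext n i = (if i = n then 1 else i + 1)"

definition periodic_orbit ::
  "('p \<Rightarrow> 'd::finite V) \<Rightarrow> (((real^'k::finite) set) \<times> (real^'k \<Rightarrow> 'p)) set \<Rightarrow> nat \<Rightarrow> (nat \<Rightarrow> 'd V) \<Rightarrow> bool" where
  "periodic_orbit f A n z \<longleftrightarrow> (\<forall>i\<in>{1..n}. osb_corr f A (z i) (z (cnext n i)))"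

definition L1 :: "'d::finite V set" where "L1 = {(x, 0) | x. True}"
definition L2 :: "'d::finite V set" where "L2 = {(0, y) | y. True}"

definition link_orbit ::
  "('p \<Rightarrow> 'd::finite V) \<Rightarrow> (((real^'k::finite) set) \<times> (real^'k \<Rightarrow> 'p)) set \<Rightarrow> nat \<Rightarrow> (nat \<Rightarrow> 'd V) \<Rightarrow> bool" where
  "link_orbit f A n z \<longleftrightarrow> z 1 \<in> L1 \<and> z (n+1) \<in> L2 \<and> (\<forall>i\<in>{1..n}. osb_corr f A (z i) (z (i+1)))"

definition inscribed_critical ::
  "('p \<Rightarrow> 'd::finite V) \<Rightarrow> (((real^'k::finite) set) \<times> (real^'k \<Rightarrow> 'p)) set \<Rightarrow> nat \<Rightarrow>
   ((nat \<Rightarrow> 'd V) \<Rightarrow> real) \<Rightarrow> (nat \<Rightarrow> 'd V) \<Rightarrow> bool" where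
  "inscribed_critical f A n Phi Q \<longleftrightarrow> (\<exists>p. (\<forall>i\<in>{1..n}. f (p i) = Q i) \<and>
      (\<forall>\<xi>. (\<forall>i\<in>{1..n}. \<xi> i \<in> tangent_space f A (p i)) \<longrightarrow>
         ((\<lambda>t. Phi (\<lambda>i. Q i + t *\<^sub>R \<xi> i)) has_real_derivative 0) (at 0)))"

definition funF :: "nat \<Rightarrow> (nat \<Rightarrow> 'd::finite V) \<Rightarrow> real" where
  "funF n Q = 2 * (\<Sum>j\<in>{1..n}. \<Sum>i\<in>{1..<j}. (-1) ^ (i + j - 1) * omega (Q i) (Q j))"

definition funG :: "nat \<Rightarrow> (nat \<Rightarrow> 'd::finite V) \<Rightarrow> real" where
  "funG n Q = 2 * (\<Sum>i\<in>{1..n}. fst (Q i) \<bullet> snd (Q i))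
     + 4 * (\<Sum>j\<in>{1..n}. \<Sum>i\<in>{1..<j}. (-1) ^ (j - i) * (fst (Q j) \<bullet> snd (Q i)))"

end

theory Submission
  imports Defs
begin

(* F and G are quadratic, so the derivative of either at Q in a direction (xi_1, ..., xi_n) has the
   form sum_k omega(xi_k, W_k) for a symplectic gradient W depending linearly on Q. Hence Q is
   critical on M^n exactly when every W_k is omega-orthogonal to T_{Q_k}M. For the midpoint polygon
   of Z the alternating sums in W_k telescope to z_{k+1} - z_k plus boundary terms in z_1 and
   z_{n+1}: for F these cancel because the polygon is closed and n is odd, for G they vanish because
   z_1 lies in L1 and z_{n+1} in L2. Criticality is then literally the billiard correspondence
   between z_k and z_{k+1}. *)

lemma omega_skew: "omega a b = - omega b a"
  by (simp add: omega_def inner_commute)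

lemma omega_along_line:
  "omega (a + t *\<^sub>R b) (c + t *\<^sub>R d) = omega a c + t * (omega a d + omega b c) + t\<^sup>2 * omega b d"
  by (simp add: omega_def algebra_simps power2_eq_square)

lemma omega_diff_right: "omega a (b - c) = omega a b - omega a c"
  by (simp add: omega_def inner_diff_right)

lemma omega_scaleR_right: "omega a (r *\<^sub>R b) = r * omega a b"
  by (simp add: omega_def algebra_simps)

lemma omega_sum_right: "omega a (\<Sum>x\<in>S. g x) = (\<Sum>x\<in>S. omega a (g x))"
  by (simp add: omega_def fst_sum snd_sum inner_sum_right sum_subtractf)

lemma alternating_sum_pairs_above:
  fixes y :: "nat \<Rightarrow> 'a::real_vector"
  assumes "k \<le> n"
  shows "(\<Sum>j\<in>{k<..n}. (-1::real) ^ (j - k) *\<^sub>R (y j + y (Suc j)))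
    = (-1) ^ (n - k) *\<^sub>R y (Suc n) - y (Suc k)"
  using assms
proof (induction n rule: dec_induct)
  case (step m)
  then have "{k<..Suc m} = insert (Suc m) {k<..m}" by auto
  with step show ?case by (simp add: Suc_diff_le algebra_simps)
qed simp

lemma alternating_sum_pairs_below:
  fixes y :: "nat \<Rightarrow> 'a::real_vector"
  assumes "1 \<le> k"
  shows "(\<Sum>i\<in>{1..<k}. (-1::real) ^ (k - i) *\<^sub>R (y i + y (Suc i)))
    = (-1) ^ (k - 1) *\<^sub>R y 1 - y k"
  using assms
proof (induction k rule: dec_induct)
  case (step m)
  have "(\<Sum>i\<in>{1..<m}. (-1::real) ^ (Suc m - i) *\<^sub>R (y i + y (Suc i)))
      = - (\<Sum>i\<in>{1..<m}. (-1::real) ^ (m - i) *\<^sub>R (y i + y (Suc i)))"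
    by (simp add: Suc_diff_le sum_negf[symmetric])
  moreover have "(-1::real) ^ (Suc m - 1) = - ((-1) ^ (m - 1))"
    using step(1) by (simp add: power_eq_if)
  ultimately show ?case
    using step by (simp add: sum.atLeastLessThan_Suc algebra_simps)
qed simp

lemma sum_upper_triangle_swap:
  "(\<Sum>j\<in>{1..n::nat}. \<Sum>i\<in>{1..<j}. g i j) = (\<Sum>i\<in>{1..n}. \<Sum>j\<in>{i<..n}. (g i j :: 'a::comm_monoid_add))"
proof -
  have "(\<Sum>j\<in>{1..n}. \<Sum>i\<in>{1..<j}. g i j) = (\<Sum>j\<in>{1..n}. \<Sum>i\<in>{i. i \<in> {1..n} \<and> i < j}. g i j)"
    by (intro sum.cong) auto
  also have "\<dots> = (\<Sum>i\<in>{1..n}. \<Sum>j\<in>{j. j \<in> {1..n} \<and> i < j}. g i j)"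
    by (rule sum.swap_restrict) auto
  also have "\<dots> = (\<Sum>i\<in>{1..n}. \<Sum>j\<in>{i<..n}. g i j)"
    by (intro sum.cong) auto
  finally show ?thesis .
qed

definition alt_sum_above :: "nat \<Rightarrow> (nat \<Rightarrow> 'a::real_vector) \<Rightarrow> nat \<Rightarrow> 'a" where
  "alt_sum_above n Q k = (\<Sum>j\<in>{k<..n}. (-1::real) ^ (j - k) *\<^sub>R Q j)"

definition alt_sum_below :: "(nat \<Rightarrow> 'a::real_vector) \<Rightarrow> nat \<Rightarrow> 'a" where
  "alt_sum_below Q k = (\<Sum>i\<in>{1..<k}. (-1::real) ^ (k - i) *\<^sub>R Q i)"

lemma alt_sum_above_midpoints:
  fixes y :: "nat \<Rightarrow> 'a::real_vector"
  assumes "k \<le> n" and "\<forall>j\<in>{k<..n}. Q j = (1/2) *\<^sub>R (y j + y (Suc j))"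
  shows "2 *\<^sub>R alt_sum_above n Q k = (-1) ^ (n - k) *\<^sub>R y (Suc n) - y (Suc k)"
proof -
  have "2 *\<^sub>R alt_sum_above n Q k = (\<Sum>j\<in>{k<..n}. (-1::real) ^ (j - k) *\<^sub>R (y j + y (Suc j)))"
    unfolding alt_sum_above_def scaleR_sum_right by (rule sum.cong) (simp_all add: assms(2))
  then show ?thesis using alternating_sum_pairs_above[OF assms(1)] by simp
qed

lemma alt_sum_below_midpoints:
  fixes y :: "nat \<Rightarrow> 'a::real_vector"
  assumes "1 \<le> k" and "\<forall>i\<in>{1..<k}. Q i = (1/2) *\<^sub>R (y i + y (Suc i))"
  shows "2 *\<^sub>R alt_sum_below Q k = (-1) ^ (k - 1) *\<^sub>R y 1 - y k"
proof -
  have "2 *\<^sub>R alt_sum_below Q k = (\<Sum>i\<in>{1..<k}. (-1::real) ^ (k - i) *\<^sub>R (y i + y (Suc i)))"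
    unfolding alt_sum_below_def scaleR_sum_right by (rule sum.cong) (simp_all add: assms(2))
  then show ?thesis using alternating_sum_pairs_below[OF assms(1)] by simp
qed

definition has_symp_gradient ::
  "nat \<Rightarrow> ((nat \<Rightarrow> 'd::finite V) \<Rightarrow> real) \<Rightarrow> (nat \<Rightarrow> 'd V) \<Rightarrow> (nat \<Rightarrow> 'd V) \<Rightarrow> bool" where
  "has_symp_gradient n Phi Q W \<longleftrightarrow>
     (\<forall>\<xi>. ((\<lambda>t. Phi (\<lambda>i. Q i + t *\<^sub>R \<xi> i)) has_real_derivative (\<Sum>k\<in>{1..n}. omega (\<xi> k) (W k))) (at 0))"

lemma has_symp_gradient_quadratic:
  assumes "\<And>\<xi> t. Phi (\<lambda>i. Q i + t *\<^sub>R \<xi> i) = Phi Q + t * (\<Sum>k\<in>{1..n}. omega (\<xi> k) (W k)) + t\<^sup>2 * Phi \<xi>"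
  shows "has_symp_gradient n Phi Q W"
  unfolding has_symp_gradient_def assms by (auto intro!: derivative_eq_intros)

lemma zero_in_tangent_space:
  assumes "closed_immersed_manifold f A"
  shows "0 \<in> tangent_space f A p"
proof -
  have "p \<in> (\<Union>(U, \<phi>)\<in>A. \<phi> ` U)"
    using assms by (simp add: closed_immersed_manifold_def)
  then obtain U \<phi> u where chart: "(U, \<phi>) \<in> A" "u \<in> U" "\<phi> u = p"
    by auto
  then obtain D where D: "((f \<circ> \<phi>) has_derivative D) (at u)"
    using assms unfolding closed_immersed_manifold_def by fast
  then have "0 \<in> range D"
    by (metis has_derivative_linear linear_0 rangeI)
  then show ?thesis
    unfolding tangent_space_def using chart D by blast
qed

lemma symp_gradient_critical_iff:
  assumes grad: "has_symp_gradient n Phi Q W" and zero: "\<forall>i\<in>{1..n}. 0 \<in> T i"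
  shows "(\<forall>\<xi>. (\<forall>i\<in>{1..n}. \<xi> i \<in> T i) \<longrightarrow> ((\<lambda>t. Phi (\<lambda>i. Q i + t *\<^sub>R \<xi> i)) has_real_derivative 0) (at 0))
     \<longleftrightarrow> (\<forall>i\<in>{1..n}. \<forall>\<zeta>\<in>T i. omega (W i) \<zeta> = 0)"
proof (intro iffI ballI allI impI)
  fix i \<zeta>
  assume crit: "\<forall>\<xi>. (\<forall>i\<in>{1..n}. \<xi> i \<in> T i) \<longrightarrow> ((\<lambda>t. Phi (\<lambda>i. Q i + t *\<^sub>R \<xi> i)) has_real_derivative 0) (at 0)"
    and i: "i \<in> {1..n}" and \<zeta>: "\<zeta> \<in> T i"
  define \<xi> where "\<xi> = (\<lambda>j. if j = i then \<zeta> else 0)"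
  have "\<forall>j\<in>{1..n}. \<xi> j \<in> T j"
    using \<zeta> zero by (simp add: \<xi>_def)
  then have "((\<lambda>t. Phi (\<lambda>i. Q i + t *\<^sub>R \<xi> i)) has_real_derivative 0) (at 0)"
    using crit by blast
  moreover have "((\<lambda>t. Phi (\<lambda>i. Q i + t *\<^sub>R \<xi> i)) has_real_derivative (\<Sum>k\<in>{1..n}. omega (\<xi> k) (W k))) (at 0)"
    using grad unfolding has_symp_gradient_def by blast
  ultimately have "(\<Sum>k\<in>{1..n}. omega (\<xi> k) (W k)) = 0"
    using DERIV_unique by blast
  moreover have "(\<Sum>k\<in>{1..n}. omega (\<xi> k) (W k)) = (\<Sum>k\<in>{1..n}. if k = i then omega \<zeta> (W i) else 0)"
    by (rule sum.cong) (auto simp: \<xi>_def omega_def)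
  ultimately show "omega (W i) \<zeta> = 0"
    using i by (simp add: omega_skew[of "W i"])
next
  fix \<xi>
  assume "\<forall>i\<in>{1..n}. \<forall>\<zeta>\<in>T i. omega (W i) \<zeta> = 0" and "\<forall>i\<in>{1..n}. \<xi> i \<in> T i"
  then have "(\<Sum>k\<in>{1..n}. omega (\<xi> k) (W k)) = 0"
    by (simp add: omega_skew[of "\<xi> _"])
  moreover have "((\<lambda>t. Phi (\<lambda>i. Q i + t *\<^sub>R \<xi> i)) has_real_derivative (\<Sum>k\<in>{1..n}. omega (\<xi> k) (W k))) (at 0)"
    using grad unfolding has_symp_gradient_def by blast
  ultimately show "((\<lambda>t. Phi (\<lambda>i. Q i + t *\<^sub>R \<xi> i)) has_real_derivative 0) (at 0)"
    by simp
qed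

lemma inscribed_critical_iff_osb_corr:
  assumes "closed_immersed_manifold f A" and "has_symp_gradient n Phi Q W"
    and "\<forall>i\<in>{1..n}. Q i = (1/2) *\<^sub>R (z i + z' i) \<and> W i = z' i - z i"
  shows "inscribed_critical f A n Phi Q \<longleftrightarrow> (\<forall>i\<in>{1..n}. osb_corr f A (z i) (z' i))"
proof -
  have crit: "(\<forall>\<xi>. (\<forall>i\<in>{1..n}. \<xi> i \<in> tangent_space f A (p i)) \<longrightarrow>
        ((\<lambda>t. Phi (\<lambda>i. Q i + t *\<^sub>R \<xi> i)) has_real_derivative 0) (at 0))
      \<longleftrightarrow> (\<forall>i\<in>{1..n}. W i \<in> symp_orth f A (p i))" for p
    using symp_gradient_critical_iff[OF assms(2), of "\<lambda>i. tangent_space f A (p i)"]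
      zero_in_tangent_space[OF assms(1)]
    by (simp add: symp_orth_def)
  have "inscribed_critical f A n Phi Q \<longleftrightarrow> (\<exists>p. \<forall>i\<in>{1..n}. f (p i) = Q i \<and> W i \<in> symp_orth f A (p i))"
    unfolding inscribed_critical_def crit by blast
  also have "\<dots> \<longleftrightarrow> (\<forall>i\<in>{1..n}. \<exists>p. f p = Q i \<and> W i \<in> symp_orth f A p)"
    by (rule bchoice_iff[symmetric])
  also have "\<dots> \<longleftrightarrow> (\<forall>i\<in>{1..n}. osb_corr f A (z i) (z' i))"
    using assms(3) by (simp add: osb_corr_def)
  finally show ?thesis .
qed

definition gradF :: "nat \<Rightarrow> (nat \<Rightarrow> 'd::finite V) \<Rightarrow> nat \<Rightarrow> 'd V" where
  "gradF n Q k = 2 *\<^sub>R alt_sum_below Q k - 2 *\<^sub>R alt_sum_above n Q k"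

lemma funF_alternating:
  "funF n Q = - 2 * (\<Sum>j\<in>{1..n}. \<Sum>i\<in>{1..<j}. (-1) ^ (j - i) * omega (Q i) (Q j))"
proof -
  have sign: "(-1::real) ^ (i + j - 1) = - ((-1) ^ (j - i))" if "1 \<le> i" "i < j" for i j :: nat
  proof -
    have "even (i + j - 1) \<longleftrightarrow> odd (j - i)" using that by presburger
    then show ?thesis by (simp add: minus_one_power_iff)
  qed
  have "(\<Sum>j\<in>{1..n}. \<Sum>i\<in>{1..<j}. (-1) ^ (i + j - 1) * omega (Q i) (Q j))
      = (\<Sum>j\<in>{1..n}. \<Sum>i\<in>{1..<j}. - ((-1) ^ (j - i) * omega (Q i) (Q j)))"
    by (intro sum.cong refl, subst sign) auto
  then show ?thesis by (simp add: funF_def sum_negf)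
qed

lemma has_symp_gradient_funF:
  fixes Q :: "nat \<Rightarrow> 'd::finite V"
  shows "has_symp_gradient n (funF n) Q (gradF n Q)"
proof (rule has_symp_gradient_quadratic)
  fix \<xi> :: "nat \<Rightarrow> 'd V" and t :: real
  have "(\<Sum>j\<in>{1..n}. \<Sum>i\<in>{1..<j}. (-1::real) ^ (j - i) * omega (\<xi> i) (Q j))
      = (\<Sum>k\<in>{1..n}. \<Sum>j\<in>{k<..n}. (-1::real) ^ (j - k) * omega (\<xi> k) (Q j))"
    by (rule sum_upper_triangle_swap)
  then have "(\<Sum>k\<in>{1..n}. omega (\<xi> k) (gradF n Q k))
      = - 2 * (\<Sum>j\<in>{1..n}. \<Sum>i\<in>{1..<j}. (-1) ^ (j - i) * (omega (Q i) (\<xi> j) + omega (\<xi> i) (Q j)))"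
    by (simp add: gradF_def alt_sum_above_def alt_sum_below_def omega_diff_right omega_scaleR_right
        omega_sum_right omega_skew[of "\<xi> _"] sum_distrib_left sum_subtractf sum.distrib
        sum_negf algebra_simps)
  then show "funF n (\<lambda>i. Q i + t *\<^sub>R \<xi> i) = funF n Q + t * (\<Sum>k\<in>{1..n}. omega (\<xi> k) (gradF n Q k)) + t\<^sup>2 * funF n \<xi>"
    by (simp add: funF_alternating omega_along_line sum.distrib sum_distrib_left distrib_left mult_ac)
qed

definition gradG :: "nat \<Rightarrow> (nat \<Rightarrow> 'd::finite V) \<Rightarrow> nat \<Rightarrow> 'd V" where
  "gradG n Q k = (- (2 *\<^sub>R fst (Q k) + 4 *\<^sub>R fst (alt_sum_above n Q k)),
                  2 *\<^sub>R snd (Q k) + 4 *\<^sub>R snd (alt_sum_below Q k))"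

lemma has_symp_gradient_funG:
  fixes Q :: "nat \<Rightarrow> 'd::finite V"
  shows "has_symp_gradient n (funG n) Q (gradG n Q)"
proof (rule has_symp_gradient_quadratic)
  fix \<xi> :: "nat \<Rightarrow> 'd V" and t :: real
  have "(\<Sum>j\<in>{1..n}. \<Sum>i\<in>{1..<j}. (-1::real) ^ (j - i) * (fst (Q j) \<bullet> snd (\<xi> i)))
      = (\<Sum>k\<in>{1..n}. \<Sum>j\<in>{k<..n}. (-1::real) ^ (j - k) * (fst (Q j) \<bullet> snd (\<xi> k)))"
    by (rule sum_upper_triangle_swap)
  then have "(\<Sum>k\<in>{1..n}. omega (\<xi> k) (gradG n Q k))
      = 2 * (\<Sum>i\<in>{1..n}. fst (Q i) \<bullet> snd (\<xi> i) + fst (\<xi> i) \<bullet> snd (Q i))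
        + 4 * (\<Sum>j\<in>{1..n}. \<Sum>i\<in>{1..<j}. (-1) ^ (j - i) * (fst (Q j) \<bullet> snd (\<xi> i) + fst (\<xi> j) \<bullet> snd (Q i)))"
    by (simp add: gradG_def alt_sum_above_def alt_sum_below_def omega_def fst_sum snd_sum
        inner_sum_right inner_commute[of "snd (\<xi> _)"] sum_distrib_left
        sum.distrib algebra_simps)
  then show "funG n (\<lambda>i. Q i + t *\<^sub>R \<xi> i) = funG n Q + t * (\<Sum>k\<in>{1..n}. omega (\<xi> k) (gradG n Q k)) + t\<^sup>2 * funG n \<xi>"
    by (simp add: funG_def sum.distrib sum_distrib_left algebra_simps power2_eq_square)
qed

lemma gradF_closed_midpoint_polygon:
  fixes y :: "nat \<Rightarrow> 'd::finite V"
  assumes "odd n" and "k \<in> {1..n}" and "y (Suc n) = y 1"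
    and "\<forall>i\<in>{1..n}. Q i = (1/2) *\<^sub>R (y i + y (Suc i))"
  shows "gradF n Q k = y (Suc k) - y k"
proof -
  have "(-1::real) ^ (n - k) = (-1) ^ (k - 1)"
    using assms(1,2) by (simp add: minus_one_power_iff)
  then show ?thesis
    using alt_sum_above_midpoints[of k n Q y] alt_sum_below_midpoints[of k Q y] assms(2-4)
    by (simp add: gradF_def)
qed

lemma gradG_midpoint_polyline:
  fixes z :: "nat \<Rightarrow> 'd::finite V"
  assumes "k \<in> {1..n}" and "snd (z 1) = 0" and "fst (z (Suc n)) = 0"
    and "\<forall>i\<in>{1..n}. Q i = (1/2) *\<^sub>R (z i + z (Suc i))"
  shows "gradG n Q k = z (Suc k) - z k"
proof -
  have above: "2 *\<^sub>R fst (alt_sum_above n Q k) = - fst (z (Suc k))"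
    using arg_cong[OF alt_sum_above_midpoints[of k n Q z], of fst] assms by simp
  have below: "2 *\<^sub>R snd (alt_sum_below Q k) = - snd (z k)"
    using arg_cong[OF alt_sum_below_midpoints[of k Q z], of snd] assms by simp
  have Qk: "2 *\<^sub>R Q k = z k + z (Suc k)"
    using assms(1,4) by simp
  have "fst (gradG n Q k) = - (fst (2 *\<^sub>R Q k) + 2 *\<^sub>R (2 *\<^sub>R fst (alt_sum_above n Q k)))"
    by (simp add: gradG_def)
  also have "\<dots> = fst (z (Suc k) - z k)"
    unfolding Qk above by (simp add: vec_eq_iff)
  finally have "fst (gradG n Q k) = fst (z (Suc k) - z k)" .
  moreover have "snd (gradG n Q k) = snd (2 *\<^sub>R Q k) + 2 *\<^sub>R (2 *\<^sub>R snd (alt_sum_below Q k))"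
    by (simp add: gradG_def)
  then have "snd (gradG n Q k) = snd (z (Suc k) - z k)"
    unfolding Qk below by (simp add: vec_eq_iff)
  ultimately show ?thesis by (simp add: prod_eq_iff)
qed

lemma periodic_orbit_iff_inscribed_critical:
  fixes z :: "nat \<Rightarrow> 'd::finite V"
  assumes "closed_immersed_manifold f A" and "odd n"
  shows "periodic_orbit f A n z \<longleftrightarrow>
    inscribed_critical f A n (funF n) (\<lambda>i. (1/2) *\<^sub>R (z i + z (cnext n i)))"
proof -
  have "gradF n (\<lambda>i. (1/2) *\<^sub>R (z i + z (cnext n i))) k = z (cnext n k) - z k" if "k \<in> {1..n}" for k
    using gradF_closed_midpoint_polygon[of n k "z(Suc n := z 1)"] \<open>odd n\<close> that
    by (auto simp: cnext_def)
  then show ?thesis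
    unfolding periodic_orbit_def
    by (intro inscribed_critical_iff_osb_corr[OF assms(1) has_symp_gradient_funF, symmetric]) simp
qed

lemma link_orbit_iff_inscribed_critical:
  fixes z :: "nat \<Rightarrow> 'd::finite V"
  assumes "closed_immersed_manifold f A" and "z 1 \<in> L1" and "z (n+1) \<in> L2"
  shows "link_orbit f A n z \<longleftrightarrow>
    inscribed_critical f A n (funG n) (\<lambda>i. (1/2) *\<^sub>R (z i + z (i+1)))"
proof -
  have "snd (z 1) = 0" and "fst (z (Suc n)) = 0"
    using assms(2,3) by (auto simp: L1_def L2_def)
  then have "gradG n (\<lambda>i. (1/2) *\<^sub>R (z i + z (i+1))) k = z (k+1) - z k" if "k \<in> {1..n}" for k
    using gradG_midpoint_polyline[of k n z] that by simp
  then have "inscribed_critical f A n (funG n) (\<lambda>i. (1/2) *\<^sub>R (z i + z (i+1)))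
      \<longleftrightarrow> (\<forall>i\<in>{1..n}. osb_corr f A (z i) (z (i+1)))"
    by (intro inscribed_critical_iff_osb_corr[OF assms(1) has_symp_gradient_funG]) simp
  then show ?thesis
    unfolding link_orbit_def using assms(2,3) by simp
qed

theorem mainTheorem8:
  fixes f :: "'p::t2_space \<Rightarrow> 'd::finite V"
    and A :: "((real^'k::finite) set \<times> (real^'k \<Rightarrow> 'p)) set"
  assumes "closed_immersed_manifold f A"
  shows "(\<forall>n (z :: nat \<Rightarrow> 'd V). odd n \<longrightarrow>
            (periodic_orbit f A n z \<longleftrightarrow>
             inscribed_critical f A n (funF n) (\<lambda>i. (1/2) *\<^sub>R (z i + z (cnext n i)))))
       \<and> (\<forall>n (z :: nat \<Rightarrow> 'd V). n \<ge> 1 \<longrightarrow> z 1 \<in> L1 \<longrightarrow> z (n+1) \<in> L2 \<longrightarrow>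
            (link_orbit f A n z \<longleftrightarrow>
             inscribed_critical f A n (funG n) (\<lambda>i. (1/2) *\<^sub>R (z i + z (i+1)))))"
  using periodic_orbit_iff_inscribed_critical[OF assms] link_orbit_iff_inscribed_critical[OF assms]
  by blast

end
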